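(* Let $L$ be the $S$-glued sum of an $S$-glued system $(L_x)_{x\in S}$, and let $U\subseteq L$ be a subset having a least element $u$ and a greatest element $v$ (with respect to the order of $L$). Let $A$ be the set of elements $a\in U$ such that there is no $b\in U$ with $u<b<a$ (and $a\ne u$). Assume that every $a\in A$ covers $u$ in $L$ and that $v=\sup_L A$. Then there is $x\in S$ with $U\subseteq L_x$ such that for all $a,b,c\in U$: $\sup_L(a,b)=c$ iff $a+_x b=c$, and $\inf_L(a,b)=c$ iff $a\cdot_x b=c$.
   Context: Let $S$ be a lattice of finite length (every chain in $S$ is finite), with order $\le$, join $\vee$ and meet $\wedge$; $x\prec y$ means that $y$ covers $x$. An \emph{$S$-glued system} is a family $(L_x,\le_x)_{x\in S}$ of lattices of finite length (with join $+_x$, meet $\cdot_x$, least element $0_x$, greatest element $1_x$), whose underlying sets may overlap, such that for all $x,y\in S$: (1) if $x\le y$ and $L_x\cap L_y\ne\emptyset$, then $L_x\cap L_y$ is a filter of $L_x$ and an ideal of $L_y$; (2) in the situation of (1), for all $a,b\in L_x\cap L_y$: $a\le_x b$ iff $a\le_y b$; (3) if $x\prec y$ then $L_x\cap L_y\ne\emptyset$; (4) $L_x\cap L_y\subseteq L_{x\wedge y}\cap L_{x\vee y}$. The \emph{$S$-glued sum} of the system is the set $L=\bigcup_{x\in S}L_x$ equipped with the relation $\le$ defined as the transitive closure of $\bigcup_{x\in S}\le_x$; it is a lattice. *)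

theory Defs
  imports Main
begin

definition is_ub :: "('a \<Rightarrow> 'a \<Rightarrow> bool) \<Rightarrow> 'a set \<Rightarrow> 'a set \<Rightarrow> 'a \<Rightarrow> bool" where
  "is_ub le A X c \<longleftrightarrow> c \<in> A \<and> (\<forall>y\<in>X. le y c)"

definition is_lb :: "('a \<Rightarrow> 'a \<Rightarrow> bool) \<Rightarrow> 'a set \<Rightarrow> 'a set \<Rightarrow> 'a \<Rightarrow> bool" where
  "is_lb le A X c \<longleftrightarrow> c \<in> A \<and> (\<forall>y\<in>X. le c y)"

definition is_sup :: "('a \<Rightarrow> 'a \<Rightarrow> bool) \<Rightarrow> 'a set \<Rightarrow> 'a set \<Rightarrow> 'a \<Rightarrow> bool" where
  "is_sup le A X c \<longleftrightarrow> is_ub le A X c \<and> (\<forall>d. is_ub le A X d \<longrightarrow> le c d)"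

definition is_inf :: "('a \<Rightarrow> 'a \<Rightarrow> bool) \<Rightarrow> 'a set \<Rightarrow> 'a set \<Rightarrow> 'a \<Rightarrow> bool" where
  "is_inf le A X c \<longleftrightarrow> is_lb le A X c \<and> (\<forall>d. is_lb le A X d \<longrightarrow> le d c)"

definition join :: "('a \<Rightarrow> 'a \<Rightarrow> bool) \<Rightarrow> 'a set \<Rightarrow> 'a \<Rightarrow> 'a \<Rightarrow> 'a" where
  "join le A a b = (THE c. is_sup le A {a, b} c)"

definition meet :: "('a \<Rightarrow> 'a \<Rightarrow> bool) \<Rightarrow> 'a set \<Rightarrow> 'a \<Rightarrow> 'a \<Rightarrow> 'a" where
  "meet le A a b = (THE c. is_inf le A {a, b} c)"

definition partial_order_on' :: "'a set \<Rightarrow> ('a \<Rightarrow> 'a \<Rightarrow> bool) \<Rightarrow> bool" where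
  "partial_order_on' A le \<longleftrightarrow>
     (\<forall>a\<in>A. le a a) \<and>
     (\<forall>a\<in>A. \<forall>b\<in>A. le a b \<and> le b a \<longrightarrow> a = b) \<and>
     (\<forall>a\<in>A. \<forall>b\<in>A. \<forall>c\<in>A. le a b \<and> le b c \<longrightarrow> le a c)"

definition is_lattice :: "'a set \<Rightarrow> ('a \<Rightarrow> 'a \<Rightarrow> bool) \<Rightarrow> bool" where
  "is_lattice A le \<longleftrightarrow> partial_order_on' A le \<and>
     (\<forall>a\<in>A. \<forall>b\<in>A. (\<exists>c. is_sup le A {a, b} c) \<and> (\<exists>c. is_inf le A {a, b} c))"

definition is_chain :: "'a set \<Rightarrow> ('a \<Rightarrow> 'a \<Rightarrow> bool) \<Rightarrow> 'a set \<Rightarrow> bool" where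
  "is_chain A le C \<longleftrightarrow> C \<subseteq> A \<and> (\<forall>a\<in>C. \<forall>b\<in>C. le a b \<or> le b a)"

definition finite_length_lattice :: "'a set \<Rightarrow> ('a \<Rightarrow> 'a \<Rightarrow> bool) \<Rightarrow> bool" where
  "finite_length_lattice A le \<longleftrightarrow> is_lattice A le \<and> (\<forall>C. is_chain A le C \<longrightarrow> finite C)"

definition is_filter :: "'a set \<Rightarrow> ('a \<Rightarrow> 'a \<Rightarrow> bool) \<Rightarrow> 'a set \<Rightarrow> bool" where
  "is_filter A le F \<longleftrightarrow> F \<noteq> {} \<and> F \<subseteq> A \<and>
     (\<forall>a\<in>F. \<forall>b\<in>A. le a b \<longrightarrow> b \<in> F) \<and>
     (\<forall>a\<in>F. \<forall>b\<in>F. meet le A a b \<in> F)"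

definition is_ideal :: "'a set \<Rightarrow> ('a \<Rightarrow> 'a \<Rightarrow> bool) \<Rightarrow> 'a set \<Rightarrow> bool" where
  "is_ideal A le I \<longleftrightarrow> I \<noteq> {} \<and> I \<subseteq> A \<and>
     (\<forall>a\<in>I. \<forall>b\<in>A. le b a \<longrightarrow> b \<in> I) \<and>
     (\<forall>a\<in>I. \<forall>b\<in>I. join le A a b \<in> I)"

definition finite_length_type :: "'s::lattice itself \<Rightarrow> bool" where
  "finite_length_type _ \<longleftrightarrow> (\<forall>C::'s set. (\<forall>a\<in>C. \<forall>b\<in>C. a \<le> b \<or> b \<le> a) \<longrightarrow> finite C)"

definition covers_S :: "'s::order \<Rightarrow> 's \<Rightarrow> bool" where
  "covers_S x y \<longleftrightarrow> x < y \<and> \<not> (\<exists>z. x < z \<and> z < y)"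

definition glued_system :: "('s::lattice \<Rightarrow> 'a set) \<Rightarrow> ('s \<Rightarrow> 'a \<Rightarrow> 'a \<Rightarrow> bool) \<Rightarrow> bool" where
  "glued_system Lc le \<longleftrightarrow>
     finite_length_type TYPE('s) \<and>
     (\<forall>x. finite_length_lattice (Lc x) (le x)) \<and>
     (\<forall>x y. x \<le> y \<and> Lc x \<inter> Lc y \<noteq> {} \<longrightarrow>
        is_filter (Lc x) (le x) (Lc x \<inter> Lc y) \<and> is_ideal (Lc y) (le y) (Lc x \<inter> Lc y) \<and>
        (\<forall>a\<in>Lc x \<inter> Lc y. \<forall>b\<in>Lc x \<inter> Lc y. le x a b \<longleftrightarrow> le y a b)) \<and>
     (\<forall>x y. covers_S x y \<longrightarrow> Lc x \<inter> Lc y \<noteq> {}) \<and>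
     (\<forall>x y. Lc x \<inter> Lc y \<subseteq> Lc (inf x y) \<inter> Lc (sup x y))"

definition glued_carrier :: "('s \<Rightarrow> 'a set) \<Rightarrow> 'a set" where
  "glued_carrier Lc = (\<Union>x. Lc x)"

definition glued_le :: "('s \<Rightarrow> 'a set) \<Rightarrow> ('s \<Rightarrow> 'a \<Rightarrow> 'a \<Rightarrow> bool) \<Rightarrow> 'a \<Rightarrow> 'a \<Rightarrow> bool" where
  "glued_le Lc le a b \<longleftrightarrow>
     (a, b) \<in> (\<Union>x. {(p, q). p \<in> Lc x \<and> q \<in> Lc x \<and> le x p q})\<^sup>+"

end

theory Submission
  imports Defs
begin

text \<open>
  The order of the glued sum \<open>L\<close> is the reflexive-transitive closure of the union \<open>R\<close> of the
  block orders. Following paths of \<open>R\<close>-steps through overlapping blocks, one shows that every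
  block \<open>L\<^sub>x\<close> is convex in \<open>L\<close>, carries the induced order, and is closed under the joins and
  meets of \<open>L\<close>. Now let \<open>z\<close> be the largest index with \<open>u \<in> L\<^sub>z\<close>. A cover \<open>u \<prec> a\<close> in \<open>L\<close> is a
  single step inside some block \<open>L\<^sub>x\<close>; since \<open>x \<le> z\<close> and \<open>L\<^sub>x \<inter> L\<^sub>z\<close> is a filter of \<open>L\<^sub>x\<close>, every
  atom of \<open>U\<close> lies in \<open>L\<^sub>z\<close>. A maximal element of \<open>L\<^sub>z\<close> below \<open>v\<close> dominates all these atoms, because
  block joins of elements below \<open>v\<close> stay below \<open>v\<close>; hence it is \<open>v\<close>, so \<open>v \<in> L\<^sub>z\<close>, and
  \<open>U \<subseteq> L\<^sub>z\<close> by convexity.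
\<close>

lemma partial_order_on'D:
  assumes "partial_order_on' A le"
  shows partial_order_on'_refl: "a \<in> A \<Longrightarrow> le a a"
    and partial_order_on'_antisym: "a \<in> A \<Longrightarrow> b \<in> A \<Longrightarrow> le a b \<Longrightarrow> le b a \<Longrightarrow> a = b"
    and partial_order_on'_trans:
      "a \<in> A \<Longrightarrow> b \<in> A \<Longrightarrow> c \<in> A \<Longrightarrow> le a b \<Longrightarrow> le b c \<Longrightarrow> le a c"
  using assms unfolding partial_order_on'_def by blast+

lemma partial_order_on'_dual:
  "partial_order_on' A le \<Longrightarrow> partial_order_on' A (\<lambda>x y. le y x)"
  unfolding partial_order_on'_def by blast

lemma is_inf_eq_is_sup_dual: "is_inf le A X c = is_sup (\<lambda>x y. le y x) A X c"
  unfolding is_inf_def is_sup_def is_lb_def is_ub_def by blast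

lemma meet_eq_join_dual: "meet le A a b = join (\<lambda>x y. le y x) A a b"
  unfolding meet_def join_def is_inf_eq_is_sup_dual ..

lemma is_lattice_dual: "is_lattice A le \<Longrightarrow> is_lattice A (\<lambda>x y. le y x)"
  unfolding is_lattice_def is_inf_def is_sup_def is_lb_def is_ub_def
  using partial_order_on'_dual[of A le] by blast

lemma is_sup_unique:
  assumes "partial_order_on' A le" "is_sup le A X c" "is_sup le A X d"
  shows "c = d"
  using assms unfolding partial_order_on'_def is_sup_def is_ub_def by blast

lemma join_eqI: "partial_order_on' A le \<Longrightarrow> is_sup le A {a, b} c \<Longrightarrow> join le A a b = c"
  unfolding join_def by (rule the_equality) (auto dest: is_sup_unique)

lemma join_is_sup:
  assumes "partial_order_on' A le" "is_sup le A {a, b} c"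
  shows "join le A a b \<in> A" "le a (join le A a b)" "le b (join le A a b)"
    "\<And>d. d \<in> A \<Longrightarrow> le a d \<Longrightarrow> le b d \<Longrightarrow> le (join le A a b) d"
  using assms(2) unfolding join_eqI[OF assms] is_sup_def is_ub_def by auto

lemma wf_strictly_above_if_finite_chains:
  assumes po: "partial_order_on' A le" and fin: "\<And>C. is_chain A le C \<Longrightarrow> finite C"
  shows "wf {(b, a). a \<in> A \<and> b \<in> A \<and> le a b \<and> a \<noteq> b}"
  unfolding wf_iff_no_infinite_down_chain
proof (rule notI, elim exE)
  fix f :: "nat \<Rightarrow> _"
  assume "\<forall>i. (f (Suc i), f i) \<in> {(b, a). a \<in> A \<and> b \<in> A \<and> le a b \<and> a \<noteq> b}"
  then have up: "f i \<in> A" "le (f i) (f (Suc i))" "f i \<noteq> f (Suc i)" for i by auto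
  have mono: "le (f i) (f j)" if "i \<le> j" for i j
    by (rule transitive_stepwise_le[of i j "\<lambda>i j. le (f i) (f j)", OF that])
      (use partial_order_on'_refl[OF po up(1)] partial_order_on'_trans[OF po up(1) up(1) up(1)] up(2)
        in blast)+
  have "f i \<noteq> f j" if "i < j" for i j
  proof
    assume "f i = f j"
    with mono[of "Suc i" j] that have "le (f (Suc i)) (f i)" by simp
    then show False using partial_order_on'_antisym[OF po up(1) up(1) up(2)] up(3) by metis
  qed
  then have "inj f" by (rule linorder_injI)
  moreover have "is_chain A le (range f)"
  proof -
    have "le (f i) (f j) \<or> le (f j) (f i)" for i j
      using mono nat_le_linear by blast
    then show ?thesis unfolding is_chain_def using up by blast
  qed
  ultimately show False using fin[of "range f"] finite_imageD[of f UNIV] by simp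
qed

lemma ex_maximal_if_finite_chains:
  assumes "partial_order_on' A le" "\<And>C. is_chain A le C \<Longrightarrow> finite C" "B \<subseteq> A" "b \<in> B"
  shows "\<exists>m\<in>B. \<forall>b\<in>B. le m b \<longrightarrow> b = m"
proof -
  obtain m where "m \<in> B" "\<And>b. (b, m) \<in> {(b, a). a \<in> A \<and> b \<in> A \<and> le a b \<and> a \<noteq> b} \<Longrightarrow> b \<notin> B"
    using wf_strictly_above_if_finite_chains[OF assms(1,2), unfolded wf_eq_minimal] assms(4)
    by meson
  then show ?thesis using assms(3) by blast
qed

lemma ex_minimal_if_finite_chains:
  assumes "partial_order_on' A le" "\<And>C. is_chain A le C \<Longrightarrow> finite C" "B \<subseteq> A" "b \<in> B"
  shows "\<exists>m\<in>B. \<forall>b\<in>B. le b m \<longrightarrow> b = m"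
proof (rule ex_maximal_if_finite_chains[OF partial_order_on'_dual[OF assms(1)] _ assms(3,4)])
  show "finite C" if "is_chain A (\<lambda>x y. le y x) C" for C
    using assms(2) that unfolding is_chain_def by blast
qed

lemma ex_bot_if_finite_chains:
  assumes lat: "is_lattice A le" and fin: "\<And>C. is_chain A le C \<Longrightarrow> finite C" and "a \<in> A"
  shows "\<exists>m\<in>A. \<forall>a\<in>A. le m a"
proof -
  have po: "partial_order_on' A le" using lat unfolding is_lattice_def by blast
  obtain m where m: "m \<in> A" "\<forall>b\<in>A. le b m \<longrightarrow> b = m"
    using ex_minimal_if_finite_chains[OF po fin order_refl \<open>a \<in> A\<close>] by blast
  have "le m a" if "a \<in> A" for a
  proof -
    obtain c where "is_inf le A {m, a} c"
      using lat m(1) \<open>a \<in> A\<close> unfolding is_lattice_def by meson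
    then have "c \<in> A" "le c m" "le c a" unfolding is_inf_def is_lb_def by auto
    then show ?thesis using m by metis
  qed
  with m show ?thesis by blast
qed

definition block_rel :: "('s \<Rightarrow> 'a set) \<Rightarrow> ('s \<Rightarrow> 'a \<Rightarrow> 'a \<Rightarrow> bool) \<Rightarrow> ('a \<times> 'a) set" where
  "block_rel Lc le = {(p, q). \<exists>x. p \<in> Lc x \<and> q \<in> Lc x \<and> le x p q}"

definition block_bot :: "('s \<Rightarrow> 'a set) \<Rightarrow> ('s \<Rightarrow> 'a \<Rightarrow> 'a \<Rightarrow> bool) \<Rightarrow> 's \<Rightarrow> 'a" where
  "block_bot Lc le x = (THE b. b \<in> Lc x \<and> (\<forall>a\<in>Lc x. le x b a))"

lemma block_rel_dual: "block_rel Lc (\<lambda>x a b. le x b a) = (block_rel Lc le)\<inverse>"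
  unfolding block_rel_def by auto

lemma glued_le_iff_trancl: "glued_le Lc le a b \<longleftrightarrow> (a, b) \<in> (block_rel Lc le)\<^sup>+"
proof -
  have "(\<Union>x. {(p, q). p \<in> Lc x \<and> q \<in> Lc x \<and> le x p q}) = block_rel Lc le"
    unfolding block_rel_def by blast
  then show ?thesis unfolding glued_le_def by simp
qed

lemma glued_le_dual: "(\<lambda>p q. glued_le Lc le q p) = glued_le Lc (\<lambda>x a b. le x b a)"
  unfolding glued_le_iff_trancl block_rel_dual[of Lc le] by (simp add: trancl_converse)

text \<open>The lattice \<open>S\<close> is passed as explicit operations rather than through its type class, so
  that a glued system can be dualised by reversing \<open>S\<close> and every block at once.\<close>

locale glued =
  fixes leS :: "'s \<Rightarrow> 's \<Rightarrow> bool" and infS supS :: "'s \<Rightarrow> 's \<Rightarrow> 's"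
    and Lc :: "'s \<Rightarrow> 'a set" and le :: "'s \<Rightarrow> 'a \<Rightarrow> 'a \<Rightarrow> bool"
  assumes leS_refl: "leS x x"
    and leS_antisym: "leS x y \<Longrightarrow> leS y x \<Longrightarrow> x = y"
    and leS_trans: "leS x y \<Longrightarrow> leS y z \<Longrightarrow> leS x z"
    and infS_lower1: "leS (infS x y) x" and infS_lower2: "leS (infS x y) y"
    and infS_greatest: "leS z x \<Longrightarrow> leS z y \<Longrightarrow> leS z (infS x y)"
    and supS_upper1: "leS x (supS x y)" and supS_upper2: "leS y (supS x y)"
    and supS_least: "leS x z \<Longrightarrow> leS y z \<Longrightarrow> leS (supS x y) z"
    and leS_chains_finite: "\<forall>a\<in>C. \<forall>b\<in>C. leS a b \<or> leS b a \<Longrightarrow> finite C"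
    and block_lattice: "is_lattice (Lc x) (le x)"
    and block_chains_finite: "is_chain (Lc x) (le x) D \<Longrightarrow> finite D"
    and overlap_up_closed:
      "leS x y \<Longrightarrow> a \<in> Lc x \<Longrightarrow> a \<in> Lc y \<Longrightarrow> b \<in> Lc x \<Longrightarrow> le x a b \<Longrightarrow> b \<in> Lc y"
    and overlap_down_closed:
      "leS x y \<Longrightarrow> a \<in> Lc x \<Longrightarrow> a \<in> Lc y \<Longrightarrow> b \<in> Lc y \<Longrightarrow> le y b a \<Longrightarrow> b \<in> Lc x"
    and overlap_meet_closed: "leS x y \<Longrightarrow> a \<in> Lc x \<Longrightarrow> a \<in> Lc y \<Longrightarrow> b \<in> Lc x \<Longrightarrow> b \<in> Lc y
      \<Longrightarrow> meet (le x) (Lc x) a b \<in> Lc y"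
    and overlap_join_closed: "leS x y \<Longrightarrow> a \<in> Lc x \<Longrightarrow> a \<in> Lc y \<Longrightarrow> b \<in> Lc x \<Longrightarrow> b \<in> Lc y
      \<Longrightarrow> join (le y) (Lc y) a b \<in> Lc x"
    and overlap_le_agree: "leS x y \<Longrightarrow> a \<in> Lc x \<Longrightarrow> a \<in> Lc y \<Longrightarrow> b \<in> Lc x \<Longrightarrow> b \<in> Lc y
      \<Longrightarrow> le x a b = le y a b"
    and cover_overlap: "leS x y \<Longrightarrow> x \<noteq> y \<Longrightarrow> \<nexists>z. leS x z \<and> z \<noteq> x \<and> leS z y \<and> z \<noteq> y
      \<Longrightarrow> Lc x \<inter> Lc y \<noteq> {}"
    and mem_block_infS: "a \<in> Lc x \<Longrightarrow> a \<in> Lc y \<Longrightarrow> a \<in> Lc (infS x y)"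
    and mem_block_supS: "a \<in> Lc x \<Longrightarrow> a \<in> Lc y \<Longrightarrow> a \<in> Lc (supS x y)"

lemma glued_if_glued_system:
  fixes Lc :: "'s::lattice \<Rightarrow> 'a set"
  assumes "glued_system Lc le"
  shows "glued (\<le>) inf sup Lc le"
proof -
  note sys = assms[unfolded glued_system_def]
  have chains: "finite_length_type TYPE('s)"
    using sys by (rule conjunct1)
  have blocks: "is_lattice (Lc x) (le x) \<and> (\<forall>D. is_chain (Lc x) (le x) D \<longrightarrow> finite D)" for x
    using sys[THEN conjunct2, THEN conjunct1] unfolding finite_length_lattice_def by blast
  have overlap: "is_filter (Lc x) (le x) (Lc x \<inter> Lc y) \<and> is_ideal (Lc y) (le y) (Lc x \<inter> Lc y)
      \<and> (\<forall>a\<in>Lc x \<inter> Lc y. \<forall>b\<in>Lc x \<inter> Lc y. le x a b \<longleftrightarrow> le y a b)"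
    if "x \<le> y" "a \<in> Lc x" "a \<in> Lc y" for x y a
    using sys[THEN conjunct2, THEN conjunct2, THEN conjunct1] that by blast
  have covers: "covers_S x y \<Longrightarrow> Lc x \<inter> Lc y \<noteq> {}" for x y
    using sys[THEN conjunct2, THEN conjunct2, THEN conjunct2, THEN conjunct1] by blast
  have inf_sup: "Lc x \<inter> Lc y \<subseteq> Lc (inf x y) \<inter> Lc (sup x y)" for x y
    using sys[THEN conjunct2, THEN conjunct2, THEN conjunct2, THEN conjunct2] by blast
  show ?thesis
  proof (unfold_locales, goal_cases)
    case (10 C) then show ?case using chains unfolding finite_length_type_def by blast
  next case (11 x) then show ?case using blocks by blast
  next case (12 x D) then show ?case using blocks by blast
  next case (13 x y a b) then show ?case using overlap[of x y a] unfolding is_filter_def by blast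
  next case (14 x y a b) then show ?case using overlap[of x y a] unfolding is_ideal_def by blast
  next case (15 x y a b) then show ?case using overlap[of x y a] unfolding is_filter_def by blast
  next case (16 x y a b) then show ?case using overlap[of x y a] unfolding is_ideal_def by blast
  next case (17 x y a b) then show ?case using overlap[of x y a] by blast
  next case (18 x y) then show ?case using covers[of x y] unfolding covers_S_def less_le by blast
  next case (19 a x y) then show ?case using inf_sup by blast
  next case (20 a x y) then show ?case using inf_sup by blast
  qed (simp_all add: le_infI)
qed

lemma glued_dual:
  assumes "glued leS infS supS Lc le"
  shows "glued (\<lambda>a b. leS b a) supS infS Lc (\<lambda>x a b. le x b a)"
proof -
  interpret glued leS infS supS Lc le by fact
  show ?thesis
  proof (unfold_locales, goal_cases)
    case 1 show ?case by (rule leS_refl)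
  next case 2 then show ?case using leS_antisym by blast
  next case 3 then show ?case using leS_trans by blast
  next case 4 show ?case by (rule supS_upper1)
  next case 5 show ?case by (rule supS_upper2)
  next case 6 then show ?case using supS_least by blast
  next case 7 show ?case by (rule infS_lower1)
  next case 8 show ?case by (rule infS_lower2)
  next case 9 then show ?case using infS_greatest by blast
  next case 10 then show ?case using leS_chains_finite by blast
  next case (11 x) then show ?case using is_lattice_dual block_lattice by blast
  next case (12 x C) then show ?case using block_chains_finite[of x C] unfolding is_chain_def by blast
  next case 13 then show ?case using overlap_down_closed by blast
  next case 14 then show ?case using overlap_up_closed by blast
  next case (15 x y a b) then show ?case
      using overlap_join_closed[of y x a b] by (simp add: meet_eq_join_dual)
  next case (16 x y a b) then show ?case
      using overlap_meet_closed[of y x a b] by (simp add: meet_eq_join_dual)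
  next case (17 x y a b) then show ?case using overlap_le_agree[of y x b a] by blast
  next case 18 then show ?case using cover_overlap by blast
  next case 19 then show ?case by (rule mem_block_supS)
  next case 20 then show ?case by (rule mem_block_infS)
  qed
qed

context glued
begin

abbreviation R where "R \<equiv> block_rel Lc le"
abbreviation bjoin where "bjoin x \<equiv> join (le x) (Lc x)"
abbreviation bmeet where "bmeet x \<equiv> meet (le x) (Lc x)"
abbreviation bot_of where "bot_of \<equiv> block_bot Lc le"
abbreviation top_of where "top_of \<equiv> block_bot Lc (\<lambda>x a b. le x b a)"

lemma block_relI: "a \<in> Lc x \<Longrightarrow> b \<in> Lc x \<Longrightarrow> le x a b \<Longrightarrow> (a, b) \<in> R"
  unfolding block_rel_def by blast

lemma block_relE: "(a, b) \<in> R \<Longrightarrow> (\<And>x. a \<in> Lc x \<Longrightarrow> b \<in> Lc x \<Longrightarrow> le x a b \<Longrightarrow> P) \<Longrightarrow> P"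
  unfolding block_rel_def by blast

lemma block_po: "partial_order_on' (Lc x) (le x)"
  using block_lattice unfolding is_lattice_def by blast

lemma block_refl: "a \<in> Lc x \<Longrightarrow> le x a a"
  by (rule partial_order_on'_refl[OF block_po])

lemma block_trans: "a \<in> Lc x \<Longrightarrow> b \<in> Lc x \<Longrightarrow> c \<in> Lc x \<Longrightarrow> le x a b \<Longrightarrow> le x b c \<Longrightarrow> le x a c"
  by (rule partial_order_on'_trans[OF block_po])

lemma block_antisym: "a \<in> Lc x \<Longrightarrow> b \<in> Lc x \<Longrightarrow> le x a b \<Longrightarrow> le x b a \<Longrightarrow> a = b"
  by (rule partial_order_on'_antisym[OF block_po])

lemma block_is_sup:
  assumes "a \<in> Lc x" "b \<in> Lc x"
  obtains c where "is_sup (le x) (Lc x) {a, b} c"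
  using block_lattice assms unfolding is_lattice_def by blast

lemma block_is_sup_dual:
  assumes "a \<in> Lc x" "b \<in> Lc x"
  obtains c where "is_sup (\<lambda>p q. le x q p) (Lc x) {a, b} c"
  using block_lattice assms unfolding is_lattice_def is_inf_eq_is_sup_dual by blast

lemma
  assumes "a \<in> Lc x" "b \<in> Lc x"
  shows block_join_closed: "bjoin x a b \<in> Lc x"
    and block_join_upper1: "le x a (bjoin x a b)"
    and block_join_upper2: "le x b (bjoin x a b)"
    and block_join_least: "d \<in> Lc x \<Longrightarrow> le x a d \<Longrightarrow> le x b d \<Longrightarrow> le x (bjoin x a b) d"
  by (rule block_is_sup[OF assms], rule join_is_sup[OF block_po], assumption)+

lemma
  assumes "a \<in> Lc x" "b \<in> Lc x"
  shows block_meet_closed: "bmeet x a b \<in> Lc x"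
    and block_meet_lower1: "le x (bmeet x a b) a"
    and block_meet_lower2: "le x (bmeet x a b) b"
    and block_meet_greatest: "d \<in> Lc x \<Longrightarrow> le x d a \<Longrightarrow> le x d b \<Longrightarrow> le x d (bmeet x a b)"
  unfolding meet_eq_join_dual
  by (rule block_is_sup_dual[OF assms], rule join_is_sup[OF partial_order_on'_dual[OF block_po]],
      assumption)+

lemma block_join_absorb: "a \<in> Lc x \<Longrightarrow> b \<in> Lc x \<Longrightarrow> le x b a \<Longrightarrow> bjoin x a b = a"
  by (meson block_antisym block_join_closed block_join_least block_join_upper1 block_refl)

lemma block_join_mono:
  assumes "a \<in> Lc x" "b \<in> Lc x" "a' \<in> Lc x" "b' \<in> Lc x" "le x a a'" "le x b b'"
  shows "le x (bjoin x a b) (bjoin x a' b')"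
  by (meson assms block_join_closed block_join_least block_join_upper1 block_join_upper2 block_trans)

lemma block_bot: "Lc x \<noteq> {} \<Longrightarrow> bot_of x \<in> Lc x \<and> (\<forall>a\<in>Lc x. le x (bot_of x) a)"
proof -
  assume "Lc x \<noteq> {}"
  then obtain m where m: "m \<in> Lc x" "\<forall>a\<in>Lc x. le x m a"
    using ex_bot_if_finite_chains[OF block_lattice[of x] block_chains_finite[of x]] by blast
  then have "\<exists>!m. m \<in> Lc x \<and> (\<forall>a\<in>Lc x. le x m a)" using block_antisym by blast
  then show ?thesis unfolding block_bot_def by (rule theI')
qed

lemma block_bot_mem: "Lc x \<noteq> {} \<Longrightarrow> bot_of x \<in> Lc x"
  and block_bot_le: "a \<in> Lc x \<Longrightarrow> le x (bot_of x) a"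
  using block_bot by blast+

lemma block_top_mem: "Lc x \<noteq> {} \<Longrightarrow> top_of x \<in> Lc x"
  and block_top_ge: "a \<in> Lc x \<Longrightarrow> le x a (top_of x)"
proof -
  interpret dual: glued "\<lambda>a b. leS b a" supS infS Lc "\<lambda>x a b. le x b a"
    by (rule glued_dual[OF glued_axioms])
  show "Lc x \<noteq> {} \<Longrightarrow> top_of x \<in> Lc x" "a \<in> Lc x \<Longrightarrow> le x a (top_of x)"
    using dual.block_bot by blast+
qed

lemma ex_leS_maximal: "B \<noteq> {} \<Longrightarrow> \<exists>m\<in>B. \<forall>b\<in>B. leS m b \<longrightarrow> b = m"
  and ex_leS_minimal: "B \<noteq> {} \<Longrightarrow> \<exists>m\<in>B. \<forall>b\<in>B. leS b m \<longrightarrow> b = m"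
proof -
  have "partial_order_on' UNIV leS"
    unfolding partial_order_on'_def using leS_refl leS_antisym leS_trans by blast
  moreover have "is_chain UNIV leS C \<Longrightarrow> finite C" for C
    unfolding is_chain_def using leS_chains_finite by blast
  ultimately show "B \<noteq> {} \<Longrightarrow> \<exists>m\<in>B. \<forall>b\<in>B. leS m b \<longrightarrow> b = m"
    "B \<noteq> {} \<Longrightarrow> \<exists>m\<in>B. \<forall>b\<in>B. leS b m \<longrightarrow> b = m"
    using ex_maximal_if_finite_chains ex_minimal_if_finite_chains by (metis ex_in_conv subset_UNIV)+
qed

lemma block_rel_lift:
  assumes "(p, q) \<in> R" "p \<in> Lc w"
  obtains w' where "leS w w'" "p \<in> Lc w'" "q \<in> Lc w'" "le w' p q"
proof -
  obtain v where v: "p \<in> Lc v" "q \<in> Lc v" "le v p q" using assms(1) by (rule block_relE)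
  have p: "p \<in> Lc (supS w v)" using mem_block_supS[OF assms(2) v(1)] .
  have q: "q \<in> Lc (supS w v)" using overlap_up_closed[OF supS_upper2 v(1) p v(2,3)] .
  show thesis
    using that[OF supS_upper1 p q] overlap_le_agree[OF supS_upper2 v(1) p v(2) q] v(3) by blast
qed

lemma steps_from_block:
  assumes "(p, q) \<in> R\<^sup>*" "p \<in> Lc z"
  shows "\<exists>w. leS z w \<and> q \<in> Lc w" and "q \<in> Lc z \<Longrightarrow> le z p q"
proof -
  have "(\<exists>w. leS z w \<and> q \<in> Lc w) \<and> (q \<in> Lc z \<longrightarrow> le z p q)"
    using assms(1)
  proof (induction rule: rtrancl_induct)
    case base
    then show ?case using assms(2) leS_refl block_refl by blast
  next
    case (step y q)
    then obtain w where w: "leS z w" "y \<in> Lc w" by blast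
    obtain w' where w': "leS w w'" "y \<in> Lc w'" "q \<in> Lc w'" "le w' y q"
      using block_rel_lift[OF step(2) w(2)] .
    have zw': "leS z w'" using leS_trans[OF w(1) w'(1)] .
    have "le z p q" if q: "q \<in> Lc z"
    proof -
      have y: "y \<in> Lc z" using overlap_down_closed[OF zw' q w'(3,2,4)] .
      have "le z y q" using overlap_le_agree[OF zw' y w'(2) q w'(3)] w'(4) by simp
      then show ?thesis using step.IH y q assms(2) block_trans by blast
    qed
    then show ?case using zw' w'(3) by blast
  qed
  then show "\<exists>w. leS z w \<and> q \<in> Lc w" "q \<in> Lc z \<Longrightarrow> le z p q" by blast+
qed

lemma steps_into_lower_block:
  "(r, q) \<in> R\<^sup>* \<Longrightarrow> q \<in> Lc z \<Longrightarrow> r \<in> Lc w \<Longrightarrow> leS z w \<Longrightarrow> r \<in> Lc z"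
proof (induction arbitrary: w rule: converse_rtrancl_induct)
  case (step r y)
  obtain w' where w': "leS w w'" "r \<in> Lc w'" "y \<in> Lc w'" "le w' r y"
    using block_rel_lift[OF step(1,5)] .
  have zw': "leS z w'" using leS_trans[OF step(6) w'(1)] .
  have "y \<in> Lc z" using step.IH[OF step(4) w'(3) zw'] .
  then show ?case using overlap_down_closed[OF zw' _ w'(3,2,4)] by blast
qed

lemma block_convex: "p \<in> Lc z \<Longrightarrow> q \<in> Lc z \<Longrightarrow> (p, r) \<in> R\<^sup>* \<Longrightarrow> (r, q) \<in> R\<^sup>* \<Longrightarrow> r \<in> Lc z"
  using steps_from_block(1) steps_into_lower_block by blast

lemma steps_imp_block_le: "p \<in> Lc z \<Longrightarrow> q \<in> Lc z \<Longrightarrow> (p, q) \<in> R\<^sup>* \<Longrightarrow> le z p q"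
  using steps_from_block(2) by blast

lemma steps_antisym: "p \<in> Lc z \<Longrightarrow> (p, q) \<in> R\<^sup>* \<Longrightarrow> (q, p) \<in> R\<^sup>* \<Longrightarrow> p = q"
  by (meson block_antisym block_convex steps_imp_block_le)

lemma steps_imp_trancl: "p \<in> Lc z \<Longrightarrow> (p, q) \<in> R\<^sup>* \<Longrightarrow> (p, q) \<in> R\<^sup>+"
  using block_relI[OF _ _ block_refl] rtranclD by (metis r_into_trancl')

lemma block_join_overlap:
  assumes "leS x y" "a \<in> Lc x" "a \<in> Lc y" "b \<in> Lc x" "b \<in> Lc y"
  shows "bjoin x a b = bjoin y a b"
proof -
  let ?j = "bjoin x a b" and ?j' = "bjoin y a b"
  have jx: "?j \<in> Lc x" and j'y: "?j' \<in> Lc y" using assms block_join_closed by blast+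
  have jy: "?j \<in> Lc y" using overlap_up_closed[OF assms(1-3) jx] assms block_join_upper1 by blast
  have j'x: "?j' \<in> Lc x" using overlap_join_closed[OF assms] .
  have "le x ?j ?j'"
    using assms block_join_least[of a x b ?j'] block_join_upper1 block_join_upper2 overlap_le_agree
      jx j'x j'y by (metis (no_types, lifting))
  moreover have "le y ?j' ?j"
    using assms block_join_least[of a y b ?j] block_join_upper1 block_join_upper2 overlap_le_agree
      jx jy by (metis (no_types, lifting))
  ultimately show ?thesis
    using block_antisym[OF jx j'x] overlap_le_agree[OF assms(1) j'x j'y jx jy] by simp
qed

lemma overlapping_cover_below:
  assumes "leS x y" "x \<noteq> y"
  obtains t where "leS x t" "leS t y" "t \<noteq> y" "Lc t \<inter> Lc y \<noteq> {}"
proof -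
  let ?B = "{t. leS x t \<and> leS t y \<and> t \<noteq> y}"
  obtain t where t: "t \<in> ?B" "\<forall>b\<in>?B. leS t b \<longrightarrow> b = t"
    using ex_leS_maximal[of ?B] assms leS_refl by blast
  then have "\<nexists>z. leS t z \<and> z \<noteq> t \<and> leS z y \<and> z \<noteq> y" using leS_trans by blast
  then show thesis using that t cover_overlap by blast
qed

lemma block_nonempty_mono:
  assumes "leS x y" "Lc x \<noteq> {}"
  shows "Lc y \<noteq> {}"
proof (cases "x = y")
  case False
  then show ?thesis using overlapping_cover_below[OF assms(1)] by blast
qed (use assms in simp)

lemma block_bot_mem_lower: "leS x y \<Longrightarrow> c \<in> Lc x \<Longrightarrow> c \<in> Lc y \<Longrightarrow> bot_of y \<in> Lc x"
  using overlap_down_closed block_bot_mem block_bot_le by blast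

lemma wf_leS_strict: "wf {(a, b). leS a b \<and> a \<noteq> b}"
proof (rule wfI_min)
  fix x :: 's and Q
  assume "x \<in> Q"
  then obtain m where "m \<in> Q" "\<forall>b\<in>Q. leS b m \<longrightarrow> b = m" using ex_leS_minimal[of Q] by blast
  then show "\<exists>z\<in>Q. \<forall>y. (y, z) \<in> {(a, b). leS a b \<and> a \<noteq> b} \<longrightarrow> y \<notin> Q" by blast
qed

lemma block_bot_steps_mono: "leS x y \<Longrightarrow> Lc x \<noteq> {} \<Longrightarrow> (bot_of x, bot_of y) \<in> R\<^sup>*"
proof (induction y rule: wf_induct_rule[OF wf_leS_strict])
  case (1 y)
  show ?case
  proof (cases "x = y")
    case False
    then obtain t c where t: "leS x t" "leS t y" "t \<noteq> y" and c: "c \<in> Lc t" "c \<in> Lc y"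
      using overlapping_cover_below[OF 1(2)] by blast
    have "bot_of y \<in> Lc t" using block_bot_mem_lower[OF t(2) c] .
    then have "(bot_of t, bot_of y) \<in> R" using block_relI block_bot_mem block_bot_le by blast
    moreover have "(bot_of x, bot_of t) \<in> R\<^sup>*" using 1 t by blast
    ultimately show ?thesis by simp
  qed simp
qed

lemma block_top_steps_mono: "leS x y \<Longrightarrow> Lc x \<noteq> {} \<Longrightarrow> (top_of x, top_of y) \<in> R\<^sup>*"
proof -
  interpret dual: glued "\<lambda>a b. leS b a" supS infS Lc "\<lambda>x a b. le x b a"
    by (rule glued_dual[OF glued_axioms])
  assume "leS x y" "Lc x \<noteq> {}"
  then have "(top_of y, top_of x) \<in> (R\<inverse>)\<^sup>*"
    using dual.block_bot_steps_mono block_nonempty_mono unfolding block_rel_dual[of Lc le] by blast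
  then show ?thesis by (simp add: rtrancl_converse)
qed

lemma mem_block_between:
  assumes "a \<in> Lc x" "a \<in> Lc w" "leS x y" "leS y w"
  shows "a \<in> Lc y"
proof -
  have y: "Lc y \<noteq> {}" using block_nonempty_mono assms by blast
  have "(bot_of y, bot_of w) \<in> R\<^sup>*" using block_bot_steps_mono[OF assms(4) y] .
  moreover have "(bot_of w, a) \<in> R" using block_relI block_bot_mem block_bot_le assms(2) by blast
  ultimately have "(bot_of y, a) \<in> R\<^sup>*" by simp
  have "(a, top_of x) \<in> R" using block_relI block_top_mem block_top_ge assms(1) by blast
  moreover have "(top_of x, top_of y) \<in> R\<^sup>*" using block_top_steps_mono assms(1,3) by blast
  ultimately have "(a, top_of y) \<in> R\<^sup>*" by (rule converse_rtrancl_into_rtrancl)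
  with \<open>(bot_of y, a) \<in> R\<^sup>*\<close> show ?thesis
    using block_convex[OF block_bot_mem[OF y] block_top_mem[OF y]] by blast
qed

lemma join_bot_mem_upper:
  assumes "leS x y" "c \<in> Lc x" "c \<in> Lc y" "p \<in> Lc x"
  shows "bjoin x p (bot_of y) \<in> Lc y"
proof -
  have b: "bot_of y \<in> Lc x" using block_bot_mem_lower[OF assms(1-3)] .
  have "bot_of y \<in> Lc y" using block_bot_mem assms(3) by blast
  then show ?thesis
    using overlap_up_closed[OF assms(1) b _ block_join_closed[OF assms(4) b]]
      block_join_upper2[OF assms(4) b] by blast
qed

text \<open>The meet \<open>t\<close> of \<open>P\<close> and \<open>q = p + \<bottom>\<^sub>y\<close> in \<open>L\<^sub>x\<^sub>'\<close> lies below \<open>q\<close>, hence in \<open>L\<^sub>x\<close> and in \<open>L\<^sub>y\<close>; there it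
  bounds \<open>p\<close> and \<open>\<bottom>\<^sub>y\<close>, which forces \<open>t = q\<close>.\<close>

lemma join_bot_le_upper:
  assumes xx': "leS x x'" and xy: "leS x y" and c: "c \<in> Lc x" "c \<in> Lc y"
    and p: "p \<in> Lc x" "p \<in> Lc x'" and P: "P \<in> Lc x'" "P \<in> Lc (supS x' y)" and pP: "le x' p P"
  shows "le x' (bjoin x p (bot_of y)) P"
proof -
  let ?y' = "supS x' y" and ?q = "bjoin x p (bot_of y)"
  have bx: "bot_of y \<in> Lc x" and bot_y: "bot_of y \<in> Lc y"
    using block_bot_mem_lower[OF xy c] block_bot_mem c(2) by blast+
  have qx: "?q \<in> Lc x" and pq: "le x p ?q"
    using block_join_closed[OF p(1) bx] block_join_upper1[OF p(1) bx] .
  have qx': "?q \<in> Lc x'" using overlap_up_closed[OF xx' p qx pq] .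
  have qy: "?q \<in> Lc y" using join_bot_mem_upper[OF xy c p(1)] .
  have qy': "?q \<in> Lc ?y'" using mem_block_supS[OF qx' qy] .
  define t where "t = bmeet x' P ?q"
  have tx': "t \<in> Lc x'" and tq: "le x' t ?q" and tP: "le x' t P"
    unfolding t_def
    using block_meet_closed[OF P(1) qx'] block_meet_lower2[OF P(1) qx'] block_meet_lower1[OF P(1) qx']
    .
  have ty': "t \<in> Lc ?y'" unfolding t_def using overlap_meet_closed[OF supS_upper1 P qx' qy'] .
  have tx: "t \<in> Lc x" using overlap_down_closed[OF xx' qx qx' tx' tq] .
  have "le ?y' t ?q" using overlap_le_agree[OF supS_upper1 tx' ty' qx' qy'] tq by simp
  then have ty: "t \<in> Lc y" using overlap_down_closed[OF supS_upper2 qy qy' ty'] by blast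
  have "le x' p t" unfolding t_def using block_meet_greatest[OF P(1) qx' p(2) pP] pq
      overlap_le_agree[OF xx' p qx qx'] by simp
  then have "le x p t" using overlap_le_agree[OF xx' p tx tx'] by simp
  moreover have "le x (bot_of y) t" using overlap_le_agree[OF xy bx bot_y tx ty] block_bot_le[OF ty] by simp
  ultimately have "le x ?q t" using block_join_least[OF p(1) bx tx] by blast
  then have "t = ?q" using block_antisym[OF tx qx] overlap_le_agree[OF xx' tx tx' qx qx'] tq by simp
  then show ?thesis using tP by simp
qed

lemma join_bot_steps:
  "(p, d) \<in> R\<^sup>* \<Longrightarrow> p \<in> Lc x \<Longrightarrow> leS x y \<Longrightarrow> leS y w \<Longrightarrow> d \<in> Lc w \<Longrightarrow> c \<in> Lc x \<Longrightarrow> c \<in> Lc y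
    \<Longrightarrow> (bjoin x p (bot_of y), d) \<in> R\<^sup>*"
proof (induction arbitrary: x y w c rule: converse_rtrancl_induct)
  case base
  have dy: "d \<in> Lc y" using mem_block_between[OF base(1,4,2,3)] .
  have bx: "bot_of y \<in> Lc x" using block_bot_mem_lower[OF base(2,5,6)] .
  have "le x (bot_of y) d"
    using overlap_le_agree[OF base(2) bx block_bot_mem base(1) dy] block_bot_le[OF dy] dy by blast
  then show ?case using block_join_absorb[OF base(1) bx] by simp
next
  case (step p p1)
  let ?q = "bjoin x p (bot_of y)"
  obtain x' where x': "leS x x'" "p \<in> Lc x'" "p1 \<in> Lc x'" "le x' p p1"
    using block_rel_lift[OF step(1,4)] .
  let ?y' = "supS x' y"
  have bx: "bot_of y \<in> Lc x" using block_bot_mem_lower[OF step(5,8,9)] .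
  have qx': "?q \<in> Lc x'"
    using overlap_up_closed[OF x'(1) step(4) x'(2) block_join_closed[OF step(4) bx]]
      block_join_upper1[OF step(4) bx] by blast
  have qy': "?q \<in> Lc ?y'" using mem_block_supS[OF qx' join_bot_mem_upper[OF step(5,8,9,4)]] .
  obtain w2 where w2: "leS x' w2" "d \<in> Lc w2" using steps_from_block(1)[OF step(2) x'(3)] by blast
  have "leS ?y' (supS w w2)"
    using supS_least leS_trans[OF step(6) supS_upper1] leS_trans[OF w2(1) supS_upper2] by blast
  then have IH: "(bjoin x' p1 (bot_of ?y'), d) \<in> R\<^sup>*"
    using step.IH[OF x'(3) supS_upper1 _ mem_block_supS[OF step(7) w2(2)] qx' qy'] by blast
  have "(?q, bjoin x' p1 (bot_of ?y')) \<in> R"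
  proof (rule block_relI)
    let ?P = "bjoin x' p1 (bot_of ?y')"
    have b': "bot_of ?y' \<in> Lc x'" using block_bot_mem_lower[OF supS_upper1 qx' qy'] .
    show P: "?P \<in> Lc x'" using block_join_closed[OF x'(3) b'] .
    have "le x' p ?P" using block_trans[OF x'(2,3) P x'(4) block_join_upper1[OF x'(3) b']] .
    then show "le x' ?q ?P"
      using join_bot_le_upper[OF x'(1) step(5,8,9,4) x'(2) P join_bot_mem_upper]
        supS_upper1 qx' qy' x'(3) by blast
  qed (rule qx')
  then show ?case using IH by (rule converse_rtrancl_into_rtrancl)
qed

text \<open>Induction along the path from \<open>p\<close> to \<open>d\<close>: before each step, \<open>s\<close> is enlarged to
  \<open>s + \<bottom>\<^sub>x\<^sub>'\<close>, which lies in the block \<open>L\<^sub>x\<^sub>'\<close> of the step and, by \<open>join_bot_steps\<close>, still below \<open>d\<close>.\<close>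

lemma block_join_steps:
  "(p, d) \<in> R\<^sup>* \<Longrightarrow> p \<in> Lc x \<Longrightarrow> s \<in> Lc x \<Longrightarrow> (s, d) \<in> R\<^sup>* \<Longrightarrow> (bjoin x p s, d) \<in> R\<^sup>*"
proof (induction arbitrary: x s rule: converse_rtrancl_induct)
  case base
  then show ?case using block_join_absorb steps_imp_block_le by simp
next
  case (step p p1)
  obtain x' where x': "leS x x'" "p \<in> Lc x'" "p1 \<in> Lc x'" "le x' p p1"
    using block_rel_lift[OF step(1,4)] .
  obtain w where w: "leS x' w" "d \<in> Lc w" using steps_from_block(1)[OF step(2) x'(3)] by blast
  let ?s' = "bjoin x s (bot_of x')"
  have b: "bot_of x' \<in> Lc x" using block_bot_mem_lower[OF x'(1) step(4) x'(2)] .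
  have s'x: "?s' \<in> Lc x" using block_join_closed[OF step(5) b] .
  have s'x': "?s' \<in> Lc x'" using join_bot_mem_upper[OF x'(1) step(4) x'(2) step(5)] .
  have "(?s', d) \<in> R\<^sup>*" using join_bot_steps[OF step(6,5) x'(1) w(1,2) step(4) x'(2)] .
  then have IH: "(bjoin x' p1 ?s', d) \<in> R\<^sup>*" using step.IH[OF x'(3) s'x'] by blast
  have "le x (bjoin x p s) (bjoin x p ?s')"
    using block_join_mono[OF step(4,5) step(4) s'x block_refl[OF step(4)]]
      block_join_upper1[OF step(5) b] by blast
  then have r1: "(bjoin x p s, bjoin x p ?s') \<in> R"
    using block_relI block_join_closed step(4,5) s'x by blast
  have "(bjoin x' p ?s', bjoin x' p1 ?s') \<in> R"
    using block_relI[OF block_join_closed[OF x'(2) s'x'] block_join_closed[OF x'(3) s'x']]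
      block_join_mono[OF x'(2) s'x' x'(3) s'x' x'(4) block_refl[OF s'x']] .
  then have r2: "(bjoin x p ?s', bjoin x' p1 ?s') \<in> R"
    using block_join_overlap[OF x'(1) step(4) x'(2) s'x s'x'] by simp
  show ?case using converse_rtrancl_into_rtrancl[OF r1 converse_rtrancl_into_rtrancl[OF r2 IH]] .
qed

lemma glued_le_iff_steps: "a \<in> Lc x \<Longrightarrow> glued_le Lc le a b \<longleftrightarrow> (a, b) \<in> R\<^sup>*"
  unfolding glued_le_iff_trancl using steps_imp_trancl[of a x b] by (blast intro: trancl_into_rtrancl)

lemma glued_partial_order: "partial_order_on' (glued_carrier Lc) (glued_le Lc le)"
  unfolding partial_order_on'_def glued_carrier_def
proof (intro conjI ballI impI; elim UN_E conjE)
  show "glued_le Lc le a a" if "a \<in> Lc x" for a x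
    using glued_le_iff_steps[OF that] by simp
  show "a = b" if "a \<in> Lc x" "glued_le Lc le a b" "glued_le Lc le b a" for a b x
    using steps_antisym[OF that(1)] that(2,3) unfolding glued_le_iff_trancl
    by (blast dest: trancl_into_rtrancl)
  show "glued_le Lc le a c" if "glued_le Lc le a b" "glued_le Lc le b c" for a b c
    using that unfolding glued_le_iff_trancl by (rule trancl_trans)
qed

lemma glued_join_eq_block_join:
  assumes a: "a \<in> Lc z" and b: "b \<in> Lc z"
  shows "join (glued_le Lc le) (glued_carrier Lc) a b = bjoin z a b"
proof (rule join_eqI[OF glued_partial_order])
  let ?j = "bjoin z a b"
  have j: "?j \<in> Lc z" using block_join_closed[OF a b] .
  have "glued_le Lc le a ?j" unfolding glued_le_iff_steps[OF a]
    using block_relI[OF a j block_join_upper1[OF a b]] by blast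
  moreover have "glued_le Lc le b ?j" unfolding glued_le_iff_steps[OF b]
    using block_relI[OF b j block_join_upper2[OF a b]] by blast
  moreover have "glued_le Lc le ?j d" if "glued_le Lc le a d" "glued_le Lc le b d" for d
    using block_join_steps[OF _ a b] that
    unfolding glued_le_iff_steps[OF a] glued_le_iff_steps[OF b] glued_le_iff_steps[OF j] .
  ultimately show "is_sup (glued_le Lc le) (glued_carrier Lc) {a, b} ?j"
    unfolding is_sup_def is_ub_def glued_carrier_def using j by blast
qed

lemma glued_meet_eq_block_meet:
  assumes "a \<in> Lc z" "b \<in> Lc z"
  shows "meet (glued_le Lc le) (glued_carrier Lc) a b = bmeet z a b"
proof -
  interpret dual: glued "\<lambda>a b. leS b a" supS infS Lc "\<lambda>x a b. le x b a"
    by (rule glued_dual[OF glued_axioms])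
  show ?thesis
    unfolding meet_eq_join_dual glued_le_dual[of Lc le] using dual.glued_join_eq_block_join[OF assms] .
qed

text \<open>After discarding trivial steps, the first step of a path from \<open>u\<close> to \<open>a\<close> leaves \<open>u\<close>, so by the
  cover condition it already reaches \<open>a\<close>.\<close>

lemma glued_cover_in_block:
  assumes ua: "glued_le Lc le u a" and "u \<noteq> a"
    and cover: "\<nexists>c. c \<in> glued_carrier Lc \<and> glued_le Lc le u c \<and> u \<noteq> c \<and> glued_le Lc le c a \<and> c \<noteq> a"
  shows "\<exists>x. u \<in> Lc x \<and> a \<in> Lc x \<and> le x u a"
proof -
  have "(u, a) \<in> (R - Id)\<^sup>*"
    using ua unfolding glued_le_iff_trancl rtrancl_r_diff_Id by (rule trancl_into_rtrancl)
  then obtain c where uc: "(u, c) \<in> R" "u \<noteq> c" and ca: "(c, a) \<in> R\<^sup>*"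
    using \<open>u \<noteq> a\<close> by (cases rule: converse_rtranclE) (auto simp: rtrancl_r_diff_Id)
  obtain x where x: "u \<in> Lc x" "c \<in> Lc x" "le x u c" using uc(1) by (rule block_relE)
  have "c \<in> glued_carrier Lc" using x(2) unfolding glued_carrier_def by blast
  moreover have "glued_le Lc le u c" "glued_le Lc le c a"
    unfolding glued_le_iff_steps[OF x(1)] glued_le_iff_steps[OF x(2)] using uc(1) ca by auto
  ultimately have "c = a" using cover uc(2) by blast
  then show ?thesis using x by blast
qed

lemma greatest_block_containing:
  assumes "a \<in> Lc x"
  obtains z where "a \<in> Lc z" "\<And>y. a \<in> Lc y \<Longrightarrow> leS y z"
proof -
  obtain z where z: "a \<in> Lc z" "\<forall>y\<in>{y. a \<in> Lc y}. leS z y \<longrightarrow> y = z"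
    using ex_leS_maximal[of "{y. a \<in> Lc y}"] assms by blast
  have "leS y z" if "a \<in> Lc y" for y
  proof -
    have "supS y z = z" using z mem_block_supS[OF that z(1)] supS_upper2 by blast
    then show ?thesis using supS_upper1[of y z] by simp
  qed
  then show thesis using that z(1) by blast
qed

lemma glued_sup_mem_block:
  assumes v: "is_sup (glued_le Lc le) (glued_carrier Lc) A v" and A: "A \<subseteq> Lc z"
    and u: "u \<in> Lc z" "glued_le Lc le u v"
  shows "v \<in> Lc z"
proof -
  let ?J = "{m \<in> Lc z. (m, v) \<in> R\<^sup>*}"
  obtain m where m: "m \<in> ?J" and max: "\<forall>j\<in>?J. le z m j \<longrightarrow> j = m"
    using ex_maximal_if_finite_chains[OF block_po[of z] block_chains_finite[of z], of ?J u] u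
      glued_le_iff_steps[OF u(1)] by blast
  have "glued_le Lc le a m" if "a \<in> A" for a
  proof -
    have a: "a \<in> Lc z" using A that by blast
    have "glued_le Lc le a v" using v that unfolding is_sup_def is_ub_def by blast
    then have "(bjoin z m a, v) \<in> R\<^sup>*"
      using block_join_steps[OF _ _ a] m glued_le_iff_steps[OF a] by blast
    then have "bjoin z m a = m" using max block_join_closed[OF _ a] block_join_upper1[OF _ a] m by blast
    then have "le z a m" using block_join_upper2[OF _ a] m by force
    then show ?thesis unfolding glued_le_iff_steps[OF a] using block_relI[OF a] m by blast
  qed
  then have "glued_le Lc le v m"
    using v m unfolding is_sup_def is_ub_def glued_carrier_def by blast
  then have "m = v"
    using steps_antisym[of m z v] m unfolding glued_le_iff_trancl by (blast dest: trancl_into_rtrancl)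
  then show ?thesis using m by blast
qed

end

theorem lemma3p1:
  fixes Lc :: "'s::lattice \<Rightarrow> 'a set"
    and le :: "'s \<Rightarrow> 'a \<Rightarrow> 'a \<Rightarrow> bool"
    and U :: "'a set" and u v :: 'a
  defines "L \<equiv> glued_carrier Lc"
    and "leL \<equiv> glued_le Lc le"
  assumes sys: "glued_system Lc le"
    and UL: "U \<subseteq> L"
    and u_least: "u \<in> U" "\<forall>b\<in>U. leL u b"
    and v_greatest: "v \<in> U" "\<forall>b\<in>U. leL b v"
    and A_covers: "\<forall>a\<in>{a\<in>U. a \<noteq> u \<and> \<not> (\<exists>b\<in>U. leL u b \<and> u \<noteq> b \<and> leL b a \<and> b \<noteq> a)}.
                     leL u a \<and> u \<noteq> a \<and> \<not> (\<exists>z\<in>L. leL u z \<and> u \<noteq> z \<and> leL z a \<and> z \<noteq> a)"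
    and v_sup: "is_sup leL L {a\<in>U. a \<noteq> u \<and> \<not> (\<exists>b\<in>U. leL u b \<and> u \<noteq> b \<and> leL b a \<and> b \<noteq> a)} v"
  shows "\<exists>x. U \<subseteq> Lc x \<and>
           (\<forall>a\<in>U. \<forall>b\<in>U. \<forall>c\<in>U.
              (join leL L a b = c \<longleftrightarrow> join (le x) (Lc x) a b = c) \<and>
              (meet leL L a b = c \<longleftrightarrow> meet (le x) (Lc x) a b = c))"
proof -
  interpret glued "(\<le>)" inf sup Lc le by (rule glued_if_glued_system[OF sys])
  define A where "A = {a\<in>U. a \<noteq> u \<and> \<not> (\<exists>b\<in>U. leL u b \<and> u \<noteq> b \<and> leL b a \<and> b \<noteq> a)}"
  obtain x0 where "u \<in> Lc x0" using UL u_least(1) unfolding L_def glued_carrier_def by blast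
  then obtain z where uz: "u \<in> Lc z" and z_greatest: "\<And>y. u \<in> Lc y \<Longrightarrow> y \<le> z"
    by (rule greatest_block_containing) blast
  have "A \<subseteq> Lc z"
  proof
    fix a assume "a \<in> A"
    then obtain x where "u \<in> Lc x" "a \<in> Lc x" "le x u a"
      using A_covers glued_cover_in_block unfolding A_def L_def leL_def by blast
    then show "a \<in> Lc z" using overlap_up_closed z_greatest uz by blast
  qed
  then have vz: "v \<in> Lc z"
    using glued_sup_mem_block v_sup uz u_least v_greatest(1) unfolding A_def L_def leL_def by blast
  have Uz: "U \<subseteq> Lc z"
  proof
    fix b assume "b \<in> U"
    then have "(u, b) \<in> R\<^sup>*" "(b, v) \<in> R\<^sup>*"
      using u_least(2) v_greatest(2) unfolding leL_def glued_le_iff_trancl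
      by (blast dest: trancl_into_rtrancl)+
    then show "b \<in> Lc z" using block_convex[OF uz vz] by blast
  qed
  show ?thesis
  proof (intro exI[of _ z] conjI ballI)
    show "U \<subseteq> Lc z" by (rule Uz)
    fix a b c assume "a \<in> U" "b \<in> U"
    then have "a \<in> Lc z" "b \<in> Lc z" using Uz by blast+
    then show "join leL L a b = c \<longleftrightarrow> join (le z) (Lc z) a b = c"
      and "meet leL L a b = c \<longleftrightarrow> meet (le z) (Lc z) a b = c"
      unfolding L_def leL_def by (simp_all add: glued_join_eq_block_join glued_meet_eq_block_meet)
  qed
qed

end
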